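(* Let $\mathcal G=(V,E)$ be a finite DAG in which every vertex has either $0$ or exactly $k$ parents, for a fixed $k\ge1$, and which has at least one vertex of depth one. Let $X$ be a BN with full support on $\mathcal G$ with states $\mathcal A$ whose non-trivial CPDs all coincide: for each $v\in V_p$ the parents are ordered as $(p_1(v),\dots,p_k(v))$ and there is a single kernel $Q:\mathcal A^k\times\mathcal A\to[0,1]$ with $\mathbb P(X_v=c\mid X_{p_1(v)}=a_1,\dots,X_{p_k(v)}=a_k)=Q(a_1,\dots,a_k;c)$ for all $v\in V_p$. Let $f:\mathcal A\to\mathcal B$ be a surjection and $U_v=f(X_v)$. Then (D3) holds if and only if for all $w,\tilde w\in\mathcal A^k$ with $f(w)=f(\tilde w)$ (coordinatewise) and all $b\in\mathcal B$, $\sum_{c\in f^{-1}(b)}Q(w;c)=\sum_{c\in f^{-1}(b)}Q(\tilde w;c)$.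
   Context: $pa(v)$ parents; $V_s$ parentless vertices, $V_p=V\setminus V_s$; $depth(v)$ maximal number of edges of a directed path from a vertex of $V_s$ to $v$. A BN on $\mathcal G$ with states $\mathcal A$ (finite) is specified by distributions $\alpha_v$ on $\mathcal A$ for $v\in V_s$ and CPDs $P_v(\cdot\mid a_{pa(v)})$ for $v\in V_p$; law $\prod_{v\in V_s}\alpha_v(x_v)\prod_{v\in V_p}P_v(x_v\mid x_{pa(v)})$; full support: all $x\in\mathcal A^V$ have positive probability. $\mathbb P_{\tilde\alpha}$ is the law with the same CPDs and initial distribution $\tilde\alpha$. (D3): for every initial distribution $\tilde\alpha$, $(U_v)$ under $\mathbb P_{\tilde\alpha}$ factorises over $\mathcal G$ (law of form $\prod_vq_v(u_v\mid u_{pa(v)})$), and for every $v\in V_p$, $b_v$, $b_{pa(v)}$ the value $\mathbb P_{\tilde\alpha}(U_v=b_v\mid U_{pa(v)}=b_{pa(v)})$ is the same for all $\tilde\alpha$ with $\mathbb P_{\tilde\alpha}(U_{pa(v)}=b_{pa(v)})>0$. *)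

theory Defs
  imports Complex_Main
begin

text \<open>A finite DAG on the finite vertex type 'v, given by an ordered parent list
  par v = (p_1(v), ..., p_k(v)); par v = [] means v is parentless (v in V_s).\<close>

definition parent_rel :: "('v \<Rightarrow> 'v list) \<Rightarrow> ('v \<times> 'v) set" where
  "parent_rel par = {(u, v). u \<in> set (par v)}"

definition is_dag :: "('v \<Rightarrow> 'v list) \<Rightarrow> bool" where
  "is_dag par \<longleftrightarrow> (\<forall>v. distinct (par v)) \<and> acyclic (parent_rel par)"

definition dpath :: "('v \<Rightarrow> 'v list) \<Rightarrow> 'v list \<Rightarrow> bool" where
  "dpath par xs \<longleftrightarrow> xs \<noteq> [] \<and> (\<forall>i. Suc i < length xs \<longrightarrow> xs ! i \<in> set (par (xs ! Suc i)))"

definition depth :: "('v \<Rightarrow> 'v list) \<Rightarrow> 'v \<Rightarrow> nat" where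
  "depth par v = Max {length xs - 1 | xs. dpath par xs \<and> par (hd xs) = [] \<and> last xs = v}"

definition init_dist :: "('v \<Rightarrow> 'v list) \<Rightarrow> ('v \<Rightarrow> 'a::finite \<Rightarrow> real) \<Rightarrow> bool" where
  "init_dist par \<alpha> \<longleftrightarrow> (\<forall>v. par v = [] \<longrightarrow> (\<forall>a. 0 \<le> \<alpha> v a) \<and> sum (\<alpha> v) UNIV = 1)"

definition is_kernel :: "nat \<Rightarrow> ('a list \<Rightarrow> 'a::finite \<Rightarrow> real) \<Rightarrow> bool" where
  "is_kernel k Q \<longleftrightarrow> (\<forall>w. length w = k \<longrightarrow> (\<forall>c. 0 \<le> Q w c) \<and> sum (Q w) UNIV = 1)"

definition bn_joint :: "('v::finite \<Rightarrow> 'v list) \<Rightarrow> ('a list \<Rightarrow> 'a \<Rightarrow> real) \<Rightarrow> ('v \<Rightarrow> 'a \<Rightarrow> real)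
    \<Rightarrow> ('v \<Rightarrow> 'a) \<Rightarrow> real" where
  "bn_joint par Q \<alpha> x = (\<Prod>v\<in>UNIV. if par v = [] then \<alpha> v (x v) else Q (map x (par v)) (x v))"

definition probU :: "('v::finite \<Rightarrow> 'v list) \<Rightarrow> ('a::finite list \<Rightarrow> 'a \<Rightarrow> real) \<Rightarrow> ('a \<Rightarrow> 'b)
    \<Rightarrow> ('v \<Rightarrow> 'a \<Rightarrow> real) \<Rightarrow> (('v \<Rightarrow> 'b) \<Rightarrow> bool) \<Rightarrow> real" where
  "probU par Q f \<alpha> E = (\<Sum>x\<in>{x. E (f \<circ> x)}. bn_joint par Q \<alpha> x)"

definition D3 :: "('v::finite \<Rightarrow> 'v list) \<Rightarrow> ('a::finite list \<Rightarrow> 'a \<Rightarrow> real) \<Rightarrow> ('a \<Rightarrow> 'b) \<Rightarrow> bool" where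
  "D3 par Q f \<longleftrightarrow>
     (\<forall>\<alpha>. init_dist par \<alpha> \<longrightarrow>
        (\<exists>q :: 'v \<Rightarrow> 'b list \<Rightarrow> 'b \<Rightarrow> real.
           (\<forall>v bs. (\<forall>b. 0 \<le> q v bs b) \<and> sum (q v bs) UNIV = 1) \<and>
           (\<forall>u. probU par Q f \<alpha> (\<lambda>u'. u' = u) = (\<Prod>v\<in>UNIV. q v (map u (par v)) (u v)))))
   \<and> (\<forall>v bs b \<alpha>1 \<alpha>2. par v \<noteq> [] \<and> init_dist par \<alpha>1 \<and> init_dist par \<alpha>2
        \<and> probU par Q f \<alpha>1 (\<lambda>u. map u (par v) = bs) > 0
        \<and> probU par Q f \<alpha>2 (\<lambda>u. map u (par v) = bs) > 0
        \<longrightarrow> probU par Q f \<alpha>1 (\<lambda>u. u v = b \<and> map u (par v) = bs) / probU par Q f \<alpha>1 (\<lambda>u. map u (par v) = bs)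
          = probU par Q f \<alpha>2 (\<lambda>u. u v = b \<and> map u (par v) = bs) / probU par Q f \<alpha>2 (\<lambda>u. map u (par v) = bs))"

end

theory Submission
  imports Defs "HOL-Library.FuncSet"
begin

text \<open>The joint law is a product of local factors, and a vertex that is a parent of no remaining
  vertex can be summed out of such a product, contributing the column sum of its factor. If the
  kernel is lumpable, summing out in this way the factors \<open>[f (X t) = u t] \<cdot> P(X t | X pa(t))\<close>
  shows that \<open>U\<close> factorises with the lumped kernel as its CPDs, and that
  \<open>P(U v = b | U pa(v) = bs)\<close> is the lumped kernel for every initial distribution.
  Conversely, all parents of a vertex of depth one are sources, so point-mass initial
  distributions put arbitrary parent configurations \<open>w\<close>, \<open>w'\<close> with \<open>f w = f w'\<close> at the parents
  with probability one; the invariance in (D3) then equates the fibre sums of \<open>Q w\<close> and \<open>Q w'\<close>.\<close>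

section \<open>Sums of products of local factors over a DAG\<close>

definition local_factors :: "('v \<Rightarrow> 'v list) \<Rightarrow> ('v \<Rightarrow> ('v \<Rightarrow> 'a) \<Rightarrow> real) \<Rightarrow> bool" where
  "local_factors par g \<longleftrightarrow> (\<forall>t x y. (\<forall>s\<in>insert t (set (par t)). x s = y s) \<longrightarrow> g t x = g t y)"

definition parent_closed :: "('v \<Rightarrow> 'v list) \<Rightarrow> 'v set \<Rightarrow> bool" where
  "parent_closed par S \<longleftrightarrow> (\<forall>t\<in>S. set (par t) \<subseteq> S)"

lemma acyclic_not_parent_self:
  assumes "acyclic (parent_rel par)"
  shows "v \<notin> set (par v)"
  using assms unfolding acyclic_def parent_rel_def by blast

lemma acyclic_obtain_sink:
  fixes par :: "'v::finite \<Rightarrow> 'v list"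
  assumes "acyclic (parent_rel par)" "S \<noteq> {}"
  obtains w where "w \<in> S" "\<forall>t\<in>S. w \<notin> set (par t)"
proof -
  have "wf ((parent_rel par)\<inverse>)"
    using finite_acyclic_wf_converse[OF finite_subset[OF subset_UNIV finite_UNIV] assms(1)] .
  then obtain w where "w \<in> S" "\<forall>y. (y, w) \<in> (parent_rel par)\<inverse> \<longrightarrow> y \<notin> S"
    using assms(2) unfolding wf_eq_minimal by blast
  then show ?thesis using that unfolding parent_rel_def by auto
qed

lemma sum_PiE_split_coordinate:
  assumes "w \<in> S" "finite S"
  shows "(\<Sum>x\<in>PiE S (\<lambda>_. UNIV::'a::finite set). F x)
       = (\<Sum>y\<in>PiE (S - {w}) (\<lambda>_. UNIV). \<Sum>c\<in>UNIV. F (y(w := c)))"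
proof -
  have S: "S = insert w (S - {w})" using assms by auto
  have "(\<Sum>x\<in>PiE S (\<lambda>_. UNIV::'a set). F x)
      = (\<Sum>x\<in>(\<lambda>(c, y). y(w := c)) ` (UNIV \<times> PiE (S - {w}) (\<lambda>_. UNIV::'a set)). F x)"
    by (subst S, subst PiE_insert_eq) simp
  also have "\<dots> = (\<Sum>p\<in>UNIV \<times> PiE (S - {w}) (\<lambda>_. UNIV::'a set). F ((\<lambda>(c, y). y(w := c)) p))"
    by (rule sum.reindex[unfolded comp_def])
       (rule inj_combinator[where T = "\<lambda>_. UNIV", simplified], simp)
  also have "\<dots> = (\<Sum>c\<in>UNIV. \<Sum>y\<in>PiE (S - {w}) (\<lambda>_. UNIV::'a set). F (y(w := c)))"
    by (subst sum.cartesian_product) (simp add: split_def)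
  also have "\<dots> = (\<Sum>y\<in>PiE (S - {w}) (\<lambda>_. UNIV). \<Sum>c\<in>UNIV. F (y(w := c)))"
    by (rule sum.swap)
  finally show ?thesis .
qed

lemma sum_eliminate_sink:
  assumes g: "local_factors par g" and "finite S" "w \<in> S"
    and sink: "\<forall>t\<in>S. w \<notin> set (par t)"
  shows "(\<Sum>x\<in>PiE S (\<lambda>_. UNIV::'a::finite set). \<Phi> x * (\<Prod>t\<in>S - {w}. g t x))
       = (\<Sum>y\<in>PiE (S - {w}) (\<lambda>_. UNIV). (\<Sum>c\<in>UNIV. \<Phi> (y(w := c))) * (\<Prod>t\<in>S - {w}. g t y))"
proof -
  have "(\<Prod>t\<in>S - {w}. g t (y(w := c))) = (\<Prod>t\<in>S - {w}. g t y)" for y and c :: 'a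
  proof (rule prod.cong[OF refl])
    fix t assume "t \<in> S - {w}"
    then have "\<forall>s\<in>insert t (set (par t)). (y(w := c)) s = y s" using sink by auto
    then show "g t (y(w := c)) = g t y" using g unfolding local_factors_def by blast
  qed
  then show ?thesis
    using assms by (simp add: sum_PiE_split_coordinate sum_distrib_right)
qed

lemma column_sum_mult_prod:
  fixes g :: "'v \<Rightarrow> ('v \<Rightarrow> 'a) \<Rightarrow> real"
  assumes "(\<Sum>c\<in>UNIV. g w (y(w := c))) = r \<or> (\<exists>s\<in>set (par w). g s y = 0)"
    and "set (par w) \<subseteq> S" "finite S"
  shows "(\<Sum>c\<in>UNIV. g w (y(w := c))) * (\<Prod>t\<in>S. g t y) = r * (\<Prod>t\<in>S. g t y)"
proof (cases "\<exists>s\<in>set (par w). g s y = 0")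
  case True
  then obtain s where "s \<in> S" "g s y = 0" using assms(2) by blast
  then have "(\<Prod>t\<in>S. g t y) = 0" using assms(3) by (auto simp: prod_zero_iff)
  then show ?thesis by simp
qed (use assms(1) in simp)

lemma sum_prod_remove_sink:
  fixes g :: "'v \<Rightarrow> ('v \<Rightarrow> 'a::finite) \<Rightarrow> real"
  assumes acyc: "acyclic (parent_rel par)" and g: "local_factors par g"
    and S: "finite S" "parent_closed par S" and w: "w \<in> S" "\<forall>t\<in>S. w \<notin> set (par t)"
    and E: "\<And>y c. E (y(w := c)) = E y"
    and column: "\<And>y. (\<Sum>c\<in>UNIV. g w (y(w := c))) = r \<or> (\<exists>s\<in>set (par w). g s y = 0)"
  shows "(\<Sum>x\<in>PiE S (\<lambda>_. UNIV). E x * (\<Prod>t\<in>S. g t x))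
       = r * (\<Sum>x\<in>PiE (S - {w}) (\<lambda>_. UNIV). E x * (\<Prod>t\<in>S - {w}. g t x))"
proof -
  have parents_w: "set (par w) \<subseteq> S - {w}"
    using S(2) w acyclic_not_parent_self[OF acyc, of w] unfolding parent_closed_def by auto
  have column_w: "(\<Sum>c\<in>UNIV. g w (y(w := c))) * (\<Prod>t\<in>S - {w}. g t y)
      = r * (\<Prod>t\<in>S - {w}. g t y)" for y
    using column_sum_mult_prod[where g = g and par = par and w = w and y = y, OF column[of y] parents_w] S(1)
    by simp
  have "(\<Sum>c\<in>UNIV. E (y(w := c)) * g w (y(w := c))) * (\<Prod>t\<in>S - {w}. g t y)
      = E y * ((\<Sum>c\<in>UNIV. g w (y(w := c))) * (\<Prod>t\<in>S - {w}. g t y))" for y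
    by (simp add: E sum_distrib_left)
  also have "\<dots> y = r * (E y * (\<Prod>t\<in>S - {w}. g t y))" for y
    by (simp only: column_w mult.left_commute)
  finally have collapse: "(\<Sum>c\<in>UNIV. E (y(w := c)) * g w (y(w := c))) * (\<Prod>t\<in>S - {w}. g t y)
      = r * (E y * (\<Prod>t\<in>S - {w}. g t y))" for y .
  have "(\<Sum>x\<in>PiE S (\<lambda>_. UNIV). E x * (\<Prod>t\<in>S. g t x))
      = (\<Sum>x\<in>PiE S (\<lambda>_. UNIV). (E x * g w x) * (\<Prod>t\<in>S - {w}. g t x))"
    using w S(1) by (simp add: prod.remove[of S w] mult_ac)
  also have "\<dots> = r * (\<Sum>x\<in>PiE (S - {w}) (\<lambda>_. UNIV). E x * (\<Prod>t\<in>S - {w}. g t x))"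
    using w S(1) by (simp add: sum_eliminate_sink[OF g] collapse sum_distrib_left)
  finally show ?thesis .
qed

text \<open>A column sum may differ from \<open>r t\<close> where a parent factor vanishes, since the whole
  product is zero there; this is what allows indicator factors.\<close>

lemma sum_prod_local_factors:
  fixes par :: "'v::finite \<Rightarrow> 'v list" and g :: "'v \<Rightarrow> ('v \<Rightarrow> 'a::finite) \<Rightarrow> real"
  assumes acyc: "acyclic (parent_rel par)" and g: "local_factors par g"
    and R: "parent_closed par R"
    and E: "\<forall>x y. (\<forall>t\<in>R. x t = y t) \<longrightarrow> E x = E y"
    and column: "\<forall>t y. t \<notin> R \<longrightarrow>
                   (\<Sum>c\<in>UNIV. g t (y(t := c))) = r t \<or> (\<exists>s\<in>set (par t). g s y = 0)"
    and "R \<subseteq> S" "parent_closed par S"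
  shows "(\<Sum>x\<in>PiE S (\<lambda>_. UNIV). E x * (\<Prod>t\<in>S. g t x))
       = (\<Prod>t\<in>S - R. r t) * (\<Sum>x\<in>PiE R (\<lambda>_. UNIV). E x * (\<Prod>t\<in>R. g t x))"
  using assms(6,7)
proof (induction "card (S - R)" arbitrary: S rule: less_induct)
  case less
  show ?case
  proof (cases "S - R = {}")
    case True
    then show ?thesis using \<open>R \<subseteq> S\<close> by (simp add: Diff_eq_empty_iff subset_antisym)
  next
    case False
    then obtain w where w: "w \<in> S - R" "\<forall>t\<in>S - R. w \<notin> set (par t)"
      by (rule acyclic_obtain_sink[OF acyc])
    have sink: "\<forall>t\<in>S. w \<notin> set (par t)" using w R unfolding parent_closed_def by blast
    have S': "R \<subseteq> S - {w}" "parent_closed par (S - {w})" "card (S - {w} - R) < card (S - R)"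
      using less.prems w sink unfolding parent_closed_def by (auto intro!: psubset_card_mono)
    have "S - {w} - R = (S - R) - {w}" by blast
    moreover have "E (y(w := c)) = E y" for y c using E w by auto
    ultimately show ?thesis
      using sum_prod_remove_sink[OF acyc g finite less.prems(2) _ sink, of E "r w"] column w
        less.hyps[OF S'(3) S'(1,2)]
      by (simp add: prod.remove[of "S - R" w])
  qed
qed

definition cpd :: "('v \<Rightarrow> 'v list) \<Rightarrow> ('a list \<Rightarrow> 'a \<Rightarrow> real) \<Rightarrow> ('v \<Rightarrow> 'a \<Rightarrow> real)
    \<Rightarrow> 'v \<Rightarrow> ('v \<Rightarrow> 'a) \<Rightarrow> real" where
  "cpd par Q \<alpha> t x = (if par t = [] then \<alpha> t (x t) else Q (map x (par t)) (x t))"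

lemma local_factors_cpd: "local_factors par (cpd par Q \<alpha>)"
  unfolding local_factors_def cpd_def by (metis (no_types, lifting) insert_iff map_cong)

lemma probU_eq_sum_PiE:
  "probU par Q f \<alpha> E
     = (\<Sum>x\<in>PiE UNIV (\<lambda>_. UNIV). (if E (f \<circ> x) then 1 else 0) * (\<Prod>t\<in>UNIV. cpd par Q \<alpha> t x))"
proof -
  have "probU par Q f \<alpha> E = (\<Sum>x\<in>UNIV. if E (f \<circ> x) then bn_joint par Q \<alpha> x else 0)"
    unfolding probU_def by (subst sum.inter_filter[symmetric]) simp_all
  then show ?thesis by (auto simp: bn_joint_def cpd_def PiE_UNIV_domain intro!: sum.cong)
qed

lemma sum_indicator_mult:
  "(\<Sum>c\<in>(UNIV::'a::finite set). (if P c then 1 else 0) * (g c :: real)) = (\<Sum>c\<in>{c. P c}. g c)"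
proof -
  have "(\<Sum>c\<in>{c\<in>UNIV. P c}. g c) = (\<Sum>c\<in>UNIV. if P c then g c else 0)"
    by (rule sum.inter_filter) simp
  then show ?thesis by (auto intro!: sum.cong)
qed

lemma cpd_column_sum:
  assumes "is_dag par" "\<forall>v. par v = [] \<or> length (par v) = k"
    and "init_dist par \<alpha>" "is_kernel k Q"
  shows "(\<Sum>c\<in>UNIV. cpd par Q \<alpha> t (y(t := c))) = 1"
proof (cases "par t = []")
  case False
  then have "length (map y (par t)) = k" using assms(2) by (metis length_map)
  moreover have "t \<notin> set (par t)"
    using assms(1) acyclic_not_parent_self unfolding is_dag_def by metis
  ultimately show ?thesis using False assms(4) unfolding is_kernel_def cpd_def by simp
qed (use assms(3) in \<open>simp add: init_dist_def cpd_def\<close>)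

text \<open>The vertices outside \<open>R\<close> disappear because every CPD column sums to 1.\<close>

lemma probU_vertex_and_parents:
  fixes par :: "'v::finite \<Rightarrow> 'v list" and Q :: "'a::finite list \<Rightarrow> 'a \<Rightarrow> real"
  assumes dag: "is_dag par" and parents: "\<forall>v. par v = [] \<or> length (par v) = k"
    and \<alpha>: "init_dist par \<alpha>" and Q: "is_kernel k Q"
    and v: "par v \<noteq> []" "v \<in> R" and R: "parent_closed par R"
    and sink: "\<forall>t\<in>R. v \<notin> set (par t)"
  shows "probU par Q f \<alpha> (\<lambda>u. B (u v) \<and> map u (par v) = bs)
       = (\<Sum>y\<in>PiE (R - {v}) (\<lambda>_. UNIV).
            (if map (f \<circ> y) (par v) = bs then \<Sum>c\<in>{c. B (f c)}. Q (map y (par v)) c else 0)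
            * (\<Prod>t\<in>R - {v}. cpd par Q \<alpha> t y))"
proof -
  have acyc: "acyclic (parent_rel par)" using dag unfolding is_dag_def by simp
  define E where "E x = (if B (f (x v)) \<and> map (f \<circ> x) (par v) = bs then 1 else 0 :: real)"
    for x :: "'v \<Rightarrow> 'a"
  have E_local: "\<forall>x y. (\<forall>t\<in>R. x t = y t) \<longrightarrow> E x = E y"
  proof (intro allI impI)
    fix x y :: "'v \<Rightarrow> 'a" assume "\<forall>t\<in>R. x t = y t"
    moreover have "set (par v) \<subseteq> R" using R v unfolding parent_closed_def by blast
    ultimately have "x v = y v" and parents_eq: "map (f \<circ> x) (par v) = map (f \<circ> y) (par v)"
      using v by (auto intro!: map_cong)
    then show "E x = E y" unfolding E_def by (simp only: parents_eq)
  qed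
  have column: "(\<Sum>c\<in>UNIV. E (y(v := c)) * cpd par Q \<alpha> v (y(v := c)))
      = (if map (f \<circ> y) (par v) = bs then \<Sum>c\<in>{c. B (f c)}. Q (map y (par v)) c else 0)" for y
    using v acyclic_not_parent_self[OF acyc, of v]
    by (simp add: E_def cpd_def fun_upd_comp sum_indicator_mult)
  have "probU par Q f \<alpha> (\<lambda>u. B (u v) \<and> map u (par v) = bs)
      = (\<Sum>x\<in>PiE UNIV (\<lambda>_. UNIV). E x * (\<Prod>t\<in>UNIV. cpd par Q \<alpha> t x))"
    by (simp add: probU_eq_sum_PiE E_def)
  also have "\<dots> = (\<Sum>x\<in>PiE R (\<lambda>_. UNIV). E x * (\<Prod>t\<in>R. cpd par Q \<alpha> t x))"
    using sum_prod_local_factors[OF acyc local_factors_cpd R E_local, where r = "\<lambda>_. 1" and S = UNIV]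
      cpd_column_sum[OF dag parents \<alpha> Q]
    by (simp add: parent_closed_def)
  also have "\<dots> = (\<Sum>x\<in>PiE R (\<lambda>_. UNIV). (E x * cpd par Q \<alpha> v x) * (\<Prod>t\<in>R - {v}. cpd par Q \<alpha> t x))"
    using v by (simp add: prod.remove[of R v] mult_ac)
  also have "\<dots> = (\<Sum>y\<in>PiE (R - {v}) (\<lambda>_. UNIV).
       (\<Sum>c\<in>UNIV. E (y(v := c)) * cpd par Q \<alpha> v (y(v := c))) * (\<Prod>t\<in>R - {v}. cpd par Q \<alpha> t y))"
    using v sink by (simp add: sum_eliminate_sink[OF local_factors_cpd])
  finally show ?thesis by (simp only: column)
qed

section \<open>Lumpable kernels satisfy (D3)\<close>

definition lumpable :: "nat \<Rightarrow> ('a list \<Rightarrow> 'a \<Rightarrow> real) \<Rightarrow> ('a \<Rightarrow> 'b) \<Rightarrow> bool" where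
  "lumpable k Q f \<longleftrightarrow> (\<forall>w w' b. length w = k \<and> length w' = k \<and> map f w = map f w' \<longrightarrow>
     (\<Sum>c\<in>{c. f c = b}. Q w c) = (\<Sum>c\<in>{c. f c = b}. Q w' c))"

text \<open>Rows of length other than \<open>k\<close> never occur in the factorisation; they are filled with an
  arbitrary point mass only to make every row a distribution.\<close>

definition lumped_kernel :: "nat \<Rightarrow> ('a list \<Rightarrow> 'a \<Rightarrow> real) \<Rightarrow> ('a \<Rightarrow> 'b) \<Rightarrow> 'b list \<Rightarrow> 'b \<Rightarrow> real" where
  "lumped_kernel k Q f bs b =
     (if length bs = k then \<Sum>c\<in>{c. f c = b}. Q (map (inv f) bs) c else if b = f undefined then 1 else 0)"

definition lumped_cpd :: "('v \<Rightarrow> 'v list) \<Rightarrow> nat \<Rightarrow> ('a list \<Rightarrow> 'a \<Rightarrow> real) \<Rightarrow> ('a \<Rightarrow> 'b)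
    \<Rightarrow> ('v \<Rightarrow> 'a \<Rightarrow> real) \<Rightarrow> 'v \<Rightarrow> 'b list \<Rightarrow> 'b \<Rightarrow> real" where
  "lumped_cpd par k Q f \<alpha> t bs b =
     (if par t = [] then \<Sum>c\<in>{c. f c = b}. \<alpha> t c else lumped_kernel k Q f bs b)"

lemma lumpable_fiber_sum:
  assumes "lumpable k Q f" "surj f" "length w = k"
  shows "(\<Sum>c\<in>{c. f c = b}. Q w c) = lumped_kernel k Q f (map f w) b"
proof -
  have "map f (map (inv f) (map f w)) = map f w" by (simp add: surj_f_inv_f[OF assms(2)])
  then show ?thesis using assms unfolding lumpable_def lumped_kernel_def by (metis length_map)
qed

lemma sum_fibers:
  fixes f :: "'a::finite \<Rightarrow> 'b"
  assumes "surj f"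
  shows "(\<Sum>b\<in>UNIV. \<Sum>c\<in>{c. f c = b}. g c) = (\<Sum>c\<in>UNIV. g c)"
proof -
  have "finite (UNIV :: 'b set)" using assms by (metis finite finite_imageI)
  then show ?thesis using sum.group[of UNIV UNIV f g] by simp
qed

lemma lumped_cpd_distribution:
  fixes \<alpha> :: "'v \<Rightarrow> 'a::finite \<Rightarrow> real"
  assumes "init_dist par \<alpha>" "is_kernel k Q" "surj f"
  shows "0 \<le> lumped_cpd par k Q f \<alpha> t bs b" "sum (lumped_cpd par k Q f \<alpha> t bs) UNIV = 1"
proof -
  have "finite (UNIV :: 'b set)" using assms(3) by (metis finite finite_imageI)
  then show "sum (lumped_cpd par k Q f \<alpha> t bs) UNIV = 1"
    using assms sum_fibers[OF assms(3), of "\<alpha> t"] sum_fibers[OF assms(3), of "Q (map (inv f) bs)"]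
    unfolding lumped_cpd_def lumped_kernel_def init_dist_def is_kernel_def
    by (cases "par t = []"; cases "length bs = k") auto
  show "0 \<le> lumped_cpd par k Q f \<alpha> t bs b"
    using assms unfolding lumped_cpd_def lumped_kernel_def init_dist_def is_kernel_def
    by (auto intro!: sum_nonneg)
qed

lemma probU_vertex_lumped:
  fixes par :: "'v::finite \<Rightarrow> 'v list" and Q :: "'a::finite list \<Rightarrow> 'a \<Rightarrow> real" and f :: "'a \<Rightarrow> 'b"
  assumes dag: "is_dag par" and parents: "\<forall>v. par v = [] \<or> length (par v) = k"
    and \<alpha>: "init_dist par \<alpha>" and Q: "is_kernel k Q"
    and lump: "lumpable k Q f" and surj: "surj f" and v: "par v \<noteq> []"
  shows "probU par Q f \<alpha> (\<lambda>u. u v = b \<and> map u (par v) = bs)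
       = lumped_kernel k Q f bs b * probU par Q f \<alpha> (\<lambda>u. map u (par v) = bs)"
proof -
  have acyc: "acyclic (parent_rel par)" using dag unfolding is_dag_def by simp
  define R where "R = {t. (t, v) \<in> (parent_rel par)\<^sup>*}"
  have R: "parent_closed par R" "v \<in> R"
    unfolding parent_closed_def R_def parent_rel_def by (auto intro: converse_rtrancl_into_rtrancl)
  have sink: "\<forall>t\<in>R. v \<notin> set (par t)"
  proof (intro ballI notI)
    fix t assume "t \<in> R" "v \<in> set (par t)"
    then have "(v, t) \<in> parent_rel par" "(t, v) \<in> (parent_rel par)\<^sup>*"
      unfolding R_def parent_rel_def by auto
    then have "(v, v) \<in> (parent_rel par)\<^sup>+" by (rule rtrancl_into_trancl2)
    then show False using acyc unfolding acyclic_def by blast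
  qed
  have len: "length (map y (par v)) = k" for y :: "'v \<Rightarrow> 'a"
    using parents v by (metis length_map)
  have row: "(if map (f \<circ> y) (par v) = bs then \<Sum>c\<in>{c. f c = b}. Q (map y (par v)) c else 0)
      = lumped_kernel k Q f bs b * (if map (f \<circ> y) (par v) = bs then \<Sum>c\<in>UNIV. Q (map y (par v)) c else 0)"
    for y :: "'v \<Rightarrow> 'a"
    using lumpable_fiber_sum[OF lump surj len] Q len unfolding is_kernel_def by auto
  note joint = probU_vertex_and_parents[OF dag parents \<alpha> Q v(1) R(2,1) sink, of f _ bs]
  have den: "probU par Q f \<alpha> (\<lambda>u. map u (par v) = bs) = (\<Sum>y\<in>PiE (R - {v}) (\<lambda>_. UNIV).
      (if map (f \<circ> y) (par v) = bs then \<Sum>c\<in>UNIV. Q (map y (par v)) c else 0)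
      * (\<Prod>t\<in>R - {v}. cpd par Q \<alpha> t y))"
    using joint[of "\<lambda>_. True"] by (simp cong: if_cong)
  show ?thesis
    unfolding joint[of "\<lambda>b'. b' = b"] den by (simp add: row sum_distrib_left mult.assoc)
qed

lemma probU_factorises_lumped:
  fixes par :: "'v::finite \<Rightarrow> 'v list" and Q :: "'a::finite list \<Rightarrow> 'a \<Rightarrow> real" and f :: "'a \<Rightarrow> 'b"
  assumes dag: "is_dag par" and parents: "\<forall>v. par v = [] \<or> length (par v) = k"
    and lump: "lumpable k Q f" and surj: "surj f"
  shows "probU par Q f \<alpha> (\<lambda>u'. u' = u) = (\<Prod>t\<in>UNIV. lumped_cpd par k Q f \<alpha> t (map u (par t)) (u t))"
proof -
  have acyc: "acyclic (parent_rel par)" using dag unfolding is_dag_def by simp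
  define g where "g t x = (if f (x t) = u t then 1 else 0) * cpd par Q \<alpha> t x" for t x
  have g: "local_factors par g"
    using local_factors_cpd[of par Q \<alpha>] unfolding local_factors_def g_def by (metis insertI1)
  have column: "(\<Sum>c\<in>UNIV. g t (y(t := c))) = lumped_cpd par k Q f \<alpha> t (map u (par t)) (u t)
      \<or> (\<exists>s\<in>set (par t). g s y = 0)" for t y
  proof (cases "par t = [] \<or> (\<exists>s\<in>set (par t). f (y s) \<noteq> u s)")
    case True
    then show ?thesis by (auto simp: g_def cpd_def lumped_cpd_def sum_indicator_mult)
  next
    case False
    then have "map (f \<circ> y) (par t) = map u (par t)" by (auto intro!: map_cong)
    moreover have "length (map y (par t)) = k" using parents False by (metis length_map)
    ultimately have "(\<Sum>c\<in>{c. f c = u t}. Q (map y (par t)) c) = lumped_kernel k Q f (map u (par t)) (u t)"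
      using lumpable_fiber_sum[OF lump surj] by (metis map_map)
    moreover have "t \<notin> set (par t)" by (rule acyclic_not_parent_self[OF acyc])
    ultimately show ?thesis
      using False by (simp add: g_def cpd_def lumped_cpd_def sum_indicator_mult)
  qed
  have indicator: "(\<Prod>t\<in>UNIV. if f (x t) = u t then 1 else 0 :: real) = (if f \<circ> x = u then 1 else 0)"
    for x :: "'v \<Rightarrow> 'a"
    by (auto simp: fun_eq_iff intro!: prod_zero)
  have "probU par Q f \<alpha> (\<lambda>u'. u' = u) = (\<Sum>x\<in>PiE UNIV (\<lambda>_. UNIV). 1 * (\<Prod>t\<in>UNIV. g t x))"
    by (simp add: probU_eq_sum_PiE g_def prod.distrib indicator)
  also have "\<dots> = (\<Prod>t\<in>UNIV. lumped_cpd par k Q f \<alpha> t (map u (par t)) (u t))"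
    using sum_prod_local_factors[OF acyc g, of "{}" "\<lambda>_. 1" "\<lambda>t. lumped_cpd par k Q f \<alpha> t (map u (par t)) (u t)" UNIV]
      column by (simp add: parent_closed_def)
  finally show ?thesis .
qed

lemma lumpable_imp_D3:
  fixes par :: "'v::finite \<Rightarrow> 'v list" and Q :: "'a::finite list \<Rightarrow> 'a \<Rightarrow> real" and f :: "'a \<Rightarrow> 'b"
  assumes dag: "is_dag par" and parents: "\<forall>v. par v = [] \<or> length (par v) = k"
    and Q: "is_kernel k Q" and lump: "lumpable k Q f" and surj: "surj f"
  shows "D3 par Q f"
  unfolding D3_def
proof (intro conjI allI impI)
  fix \<alpha> :: "'v \<Rightarrow> 'a \<Rightarrow> real" assume \<alpha>: "init_dist par \<alpha>"
  show "\<exists>q :: 'v \<Rightarrow> 'b list \<Rightarrow> 'b \<Rightarrow> real.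
           (\<forall>v bs. (\<forall>b. 0 \<le> q v bs b) \<and> sum (q v bs) UNIV = 1) \<and>
           (\<forall>u. probU par Q f \<alpha> (\<lambda>u'. u' = u) = (\<Prod>v\<in>UNIV. q v (map u (par v)) (u v)))"
    using lumped_cpd_distribution[OF \<alpha> Q surj] probU_factorises_lumped[OF dag parents lump surj]
    by blast
next
  fix v bs b \<alpha>1 \<alpha>2
  assume "par v \<noteq> [] \<and> init_dist par \<alpha>1 \<and> init_dist par \<alpha>2
        \<and> probU par Q f \<alpha>1 (\<lambda>u. map u (par v) = bs) > 0
        \<and> probU par Q f \<alpha>2 (\<lambda>u. map u (par v) = bs) > 0"
  then show "probU par Q f \<alpha>1 (\<lambda>u. u v = b \<and> map u (par v) = bs) / probU par Q f \<alpha>1 (\<lambda>u. map u (par v) = bs)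
           = probU par Q f \<alpha>2 (\<lambda>u. u v = b \<and> map u (par v) = bs) / probU par Q f \<alpha>2 (\<lambda>u. map u (par v) = bs)"
    using probU_vertex_lumped[OF dag parents _ Q lump surj] by simp
qed

section \<open>Vertices of depth one\<close>

lemma dpath_trancl:
  assumes "dpath par xs" "j < length xs" "i < j"
  shows "(xs ! i, xs ! j) \<in> (parent_rel par)\<^sup>+"
  using assms(2,3)
proof (induction j)
  case (Suc j)
  have "(xs ! j, xs ! Suc j) \<in> parent_rel par"
    using assms(1) Suc.prems unfolding dpath_def parent_rel_def by auto
  then show ?case using Suc by (cases "i = j") (auto intro: trancl_into_trancl)
qed simp

lemma dpath_distinct:
  assumes "acyclic (parent_rel par)" "dpath par xs"
  shows "distinct xs"
  unfolding distinct_conv_nth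
proof (intro allI impI)
  fix i j assume "i < length xs" "j < length xs" "i \<noteq> j"
  then show "xs ! i \<noteq> xs ! j"
    using dpath_trancl[OF assms(2)] assms(1) unfolding acyclic_def
    by (metis linorder_neqE_nat)
qed

lemma dpath_snoc:
  assumes "dpath par xs" "last xs \<in> set (par y)"
  shows "dpath par (xs @ [y])"
  unfolding dpath_def
proof (intro conjI allI impI)
  fix i assume i: "Suc i < length (xs @ [y])"
  show "(xs @ [y]) ! i \<in> set (par ((xs @ [y]) ! Suc i))"
  proof (cases "Suc i < length xs")
    case True
    then show ?thesis using assms(1) unfolding dpath_def by (simp add: nth_append)
  next
    case False
    then have "i = length xs - 1" "xs \<noteq> []" using i assms(1) unfolding dpath_def by auto
    then show ?thesis using assms(2) by (simp add: nth_append last_conv_nth)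
  qed
qed simp

lemma dpath_last_source:
  assumes "dpath par xs" "par (last xs) = []"
  shows "length xs = 1"
proof (rule ccontr)
  assume "length xs \<noteq> 1"
  then have "Suc (length xs - 2) < length xs" "Suc (length xs - 2) = length xs - 1"
    using assms(1) unfolding dpath_def by (cases xs; auto)+
  then show False using assms unfolding dpath_def by (metis empty_iff last_conv_nth list.set(1))
qed

lemma exists_source_dpath:
  fixes par :: "'v::finite \<Rightarrow> 'v list"
  assumes "acyclic (parent_rel par)"
  shows "\<exists>xs. dpath par xs \<and> par (hd xs) = [] \<and> last xs = v"
proof -
  have "wf (parent_rel par)"
    using finite_acyclic_wf[OF finite_subset[OF subset_UNIV finite_UNIV] assms] .
  then show ?thesis
  proof (induction v rule: wf_induct_rule)
    case (less v)
    show ?case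
    proof (cases "par v = []")
      case True
      then show ?thesis by (intro exI[of _ "[v]"]) (simp add: dpath_def)
    next
      case False
      then have "(hd (par v), v) \<in> parent_rel par" unfolding parent_rel_def by simp
      then obtain xs where xs: "dpath par xs" "par (hd xs) = []" "last xs = hd (par v)"
        using less.IH by blast
      moreover have "dpath par (xs @ [v])" using xs(1,3) False by (intro dpath_snoc) simp_all
      moreover have "xs \<noteq> []" using xs(1) unfolding dpath_def by simp
      ultimately show ?thesis using xs by (intro exI[of _ "xs @ [v]"]) simp
    qed
  qed
qed

lemma dpath_length_le_depth:
  fixes par :: "'v::finite \<Rightarrow> 'v list"
  assumes acyc: "acyclic (parent_rel par)"
    and xs: "dpath par xs" "par (hd xs) = []" "last xs = v"
  shows "length xs - 1 \<le> depth par v"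
proof -
  have "length ys \<le> card (UNIV :: 'v set)" if "dpath par ys" for ys
    using dpath_distinct[OF acyc that] by (metis distinct_card card_mono finite_UNIV subset_UNIV)
  then have "{length xs - 1 | xs. dpath par xs \<and> par (hd xs) = [] \<and> last xs = v} \<subseteq> {..card (UNIV :: 'v set)}"
    by force
  then show ?thesis
    unfolding depth_def using xs by (intro Max_ge) (auto intro: finite_subset)
qed

lemma depth_source:
  fixes par :: "'v::finite \<Rightarrow> 'v list"
  assumes "par v = []"
  shows "depth par v = 0"
proof -
  have "{length xs - 1 | xs. dpath par xs \<and> par (hd xs) = [] \<and> last xs = v} = {0}"
    using assms dpath_last_source[of par _] by (auto intro!: exI[of _ "[v]"] simp: dpath_def)
  then show ?thesis unfolding depth_def by simp
qed

lemma depth_one_parents_are_sources: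
  fixes par :: "'v::finite \<Rightarrow> 'v list"
  assumes acyc: "acyclic (parent_rel par)" and "depth par v = 1"
  shows "par v \<noteq> []" "\<forall>p\<in>set (par v). par p = []"
proof -
  show "par v \<noteq> []" using assms depth_source by force
  show "\<forall>p\<in>set (par v). par p = []"
  proof (rule ccontr)
    assume "\<not> (\<forall>p\<in>set (par v). par p = [])"
    then obtain p where p: "p \<in> set (par v)" "par p \<noteq> []" by blast
    obtain xs where xs: "dpath par xs" "par (hd xs) = []" "last xs = hd (par p)"
      using exists_source_dpath[OF acyc] by blast
    have "xs \<noteq> []" using xs(1) unfolding dpath_def by simp
    have "dpath par (xs @ [p])" using xs p by (intro dpath_snoc) auto
    from dpath_snoc[OF this] have "dpath par ((xs @ [p]) @ [v])" using p by simp
    then have "length ((xs @ [p]) @ [v]) - 1 \<le> depth par v"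
      using xs \<open>xs \<noteq> []\<close> by (intro dpath_length_le_depth[OF acyc]) auto
    then show False using assms(2) \<open>xs \<noteq> []\<close> by simp
  qed
qed

section \<open>(D3) forces lumpability\<close>

definition point_init :: "('v \<Rightarrow> 'a) \<Rightarrow> 'v \<Rightarrow> 'a \<Rightarrow> real" where
  "point_init z t a = (if a = z t then 1 else 0)"

lemma init_dist_point_init: "init_dist par (point_init (z :: 'v \<Rightarrow> 'a::finite))"
  unfolding init_dist_def point_init_def by simp

lemma sum_PiE_point_mass:
  fixes z :: "'v \<Rightarrow> 'a::finite"
  assumes "finite P"
  shows "(\<Sum>y\<in>PiE P (\<lambda>_. UNIV). G y * (\<Prod>t\<in>P. if y t = z t then 1 else 0 :: real)) = G (restrict z P)"
proof -
  have "G y * (\<Prod>t\<in>P. if y t = z t then 1 else 0 :: real) = (if y = restrict z P then G y else 0)"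
    if y: "y \<in> PiE P (\<lambda>_. UNIV)" for y
  proof (cases "y = restrict z P")
    case False
    then obtain t where "t \<in> P" "y t \<noteq> z t"
      using y by (auto simp: PiE_def extensional_def fun_eq_iff split: if_splits)
    then have "(\<Prod>t\<in>P. if y t = z t then 1 else 0 :: real) = 0"
      using assms by (intro prod_zero) auto
    then show ?thesis using False by simp
  qed simp
  then have "(\<Sum>y\<in>PiE P (\<lambda>_. UNIV). G y * (\<Prod>t\<in>P. if y t = z t then 1 else 0 :: real))
      = (\<Sum>y\<in>PiE P (\<lambda>_. UNIV). if y = restrict z P then G y else 0)"
    by (rule sum.cong[OF refl])
  also have "\<dots> = G (restrict z P)"
    using assms by (subst sum.delta) (auto simp: finite_PiE)
  finally show ?thesis .
qed

lemma probU_point_init: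
  fixes par :: "'v::finite \<Rightarrow> 'v list" and Q :: "'a::finite list \<Rightarrow> 'a \<Rightarrow> real"
  assumes dag: "is_dag par" and parents: "\<forall>v. par v = [] \<or> length (par v) = k"
    and Q: "is_kernel k Q"
    and v: "par v \<noteq> []" and sources: "\<forall>p\<in>set (par v). par p = []"
    and z: "map z (par v) = w"
  shows "probU par Q f (point_init z) (\<lambda>u. B (u v) \<and> map u (par v) = map f w)
       = (\<Sum>c\<in>{c. B (f c)}. Q w c)"
proof -
  have acyc: "acyclic (parent_rel par)" using dag unfolding is_dag_def by simp
  define R where "R = insert v (set (par v))"
  have R: "parent_closed par R" "v \<in> R" "R - {v} = set (par v)"
    using sources acyclic_not_parent_self[OF acyc, of v] unfolding R_def parent_closed_def by auto
  have sink: "\<forall>t\<in>R. v \<notin> set (par t)"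
    using sources acyclic_not_parent_self[OF acyc, of v] unfolding R_def by auto
  have "map (restrict z (set (par v))) (par v) = w" unfolding z[symmetric] by (intro map_cong) auto
  moreover from this have "map (f \<circ> restrict z (set (par v))) (par v) = map f w" by auto
  ultimately show ?thesis
    using probU_vertex_and_parents[OF dag parents init_dist_point_init Q v R(2,1) sink,
        where f = f and B = B and bs = "map f w"] sources
    by (simp add: R(3) cpd_def point_init_def sum_PiE_point_mass cong: prod.cong)
qed

lemma exists_map_eq:
  assumes "distinct xs" "length xs = length w"
  shows "\<exists>z. map z xs = w"
  using assms
proof (induction xs arbitrary: w)
  case (Cons x xs)
  then obtain a w' where w: "w = a # w'" by (cases w) auto
  with Cons obtain z where "map z xs = w'" by auto
  moreover have "map (z(x := a)) xs = map z xs" using Cons.prems(1) by (auto intro!: map_cong)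
  ultimately have "map (z(x := a)) (x # xs) = w" using w by (simp only: list.map fun_upd_same)
  then show ?case by blast
qed simp

lemma D3_imp_lumpable:
  fixes par :: "'v::finite \<Rightarrow> 'v list" and Q :: "'a::finite list \<Rightarrow> 'a \<Rightarrow> real" and f :: "'a \<Rightarrow> 'b"
  assumes dag: "is_dag par" and parents: "\<forall>v. par v = [] \<or> length (par v) = k"
    and depth_one: "\<exists>v. depth par v = 1" and Q: "is_kernel k Q" and D3: "D3 par Q f"
  shows "lumpable k Q f"
  unfolding lumpable_def
proof (intro allI impI, elim conjE)
  fix w w' b assume w: "length w = k" and w': "length w' = k" and fw: "map f w = map f w'"
  have acyc: "acyclic (parent_rel par)" using dag unfolding is_dag_def by simp
  obtain v where "depth par v = 1" using depth_one by blast
  from depth_one_parents_are_sources[OF acyc this]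
  have v: "par v \<noteq> []" and sources: "\<forall>p\<in>set (par v). par p = []" .
  have "distinct (par v)" "length (par v) = k" using dag parents v unfolding is_dag_def by auto
  then obtain z z' where z: "map z (par v) = w" and z': "map z' (par v) = w'"
    using exists_map_eq[of "par v" w] exists_map_eq[of "par v" w'] w w' by auto
  note point = probU_point_init[OF dag parents Q v sources, where f = f]
  have "(\<Sum>c\<in>UNIV. Q u c) = 1" if "length u = k" for u
    using Q that unfolding is_kernel_def by blast
  then have marginal: "probU par Q f (point_init z) (\<lambda>u. map u (par v) = map f w) = 1"
    "probU par Q f (point_init z') (\<lambda>u. map u (par v) = map f w) = 1"
    using point[OF z, where B = "\<lambda>_. True"] point[OF z', where B = "\<lambda>_. True"] w w'
    by (simp_all add: fw)
  have "\<forall>v bs b \<alpha>1 \<alpha>2. par v \<noteq> [] \<and> init_dist par \<alpha>1 \<and> init_dist par \<alpha>2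
        \<and> probU par Q f \<alpha>1 (\<lambda>u. map u (par v) = bs) > 0
        \<and> probU par Q f \<alpha>2 (\<lambda>u. map u (par v) = bs) > 0
        \<longrightarrow> probU par Q f \<alpha>1 (\<lambda>u. u v = b \<and> map u (par v) = bs) / probU par Q f \<alpha>1 (\<lambda>u. map u (par v) = bs)
          = probU par Q f \<alpha>2 (\<lambda>u. u v = b \<and> map u (par v) = bs) / probU par Q f \<alpha>2 (\<lambda>u. map u (par v) = bs)"
    using D3 unfolding D3_def by blast
  from this[rule_format, where v = v and bs = "map f w" and b = b
      and ?\<alpha>1.0 = "point_init z" and ?\<alpha>2.0 = "point_init z'"]
  have "probU par Q f (point_init z) (\<lambda>u. u v = b \<and> map u (par v) = map f w)
      = probU par Q f (point_init z') (\<lambda>u. u v = b \<and> map u (par v) = map f w)"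
    using v marginal by (simp add: init_dist_point_init)
  then show "(\<Sum>c\<in>{c. f c = b}. Q w c) = (\<Sum>c\<in>{c. f c = b}. Q w' c)"
    using point[OF z, where B = "\<lambda>b'. b' = b"] point[OF z', where B = "\<lambda>b'. b' = b"]
    by (simp add: fw)
qed

theorem mainTheorem14:
  fixes par :: "'v::finite \<Rightarrow> 'v list"
    and k :: nat
    and \<alpha> :: "'v \<Rightarrow> 'a::finite \<Rightarrow> real"
    and Q :: "'a list \<Rightarrow> 'a \<Rightarrow> real"
    and f :: "'a \<Rightarrow> 'b"
  assumes dag: "is_dag par"
    and k_pos: "1 \<le> k"
    and parents: "\<forall>v. par v = [] \<or> length (par v) = k"
    and depth_one: "\<exists>v. depth par v = 1"
    and alpha: "init_dist par \<alpha>"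
    and kernel: "is_kernel k Q"
    and full_support: "\<forall>x. bn_joint par Q \<alpha> x > 0"
    and surj: "surj f"
  shows "D3 par Q f \<longleftrightarrow>
    (\<forall>w w' b. length w = k \<and> length w' = k \<and> map f w = map f w' \<longrightarrow>
       (\<Sum>c\<in>{c. f c = b}. Q w c) = (\<Sum>c\<in>{c. f c = b}. Q w' c))"
  using D3_imp_lumpable[OF dag parents depth_one kernel] lumpable_imp_D3[OF dag parents kernel _ surj]
  unfolding lumpable_def by blast

end
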